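(* Assume Assumption A, and let $P\in\Pi(\mu,\nu)$ satisfy $H(P|\mu\otimes\nu)<\infty$ and, for $\mu$-a.e. $x$, $\int(y-x)P_x(dy)>0$ if $x\ge0$ and $<0$ if $x<0$. For each $m\in\mathbb{N}$ let $h_m\in L_m(\mathbb{R})$ be a maximizer of $h\mapsto\inf_{\pi\in\Pi(\mu,\nu)}\big(\int h(x)(y-x)\,d\pi+H(\pi|\mu\otimes\nu)\big)$ over $L_m(\mathbb{R})$. Then there exists $m_0\in\mathbb{N}$ such that $$\int|h_m(x)|\,\Big|\int(y-x)P_x(dy)\Big|\,\mu(dx)\le H(P|\mu\otimes\nu)<\infty\qquad\text{for all }m\ge m_0.$$ In particular, $(h_m)_{m\ge m_0}$ is bounded in $L^1(\tilde\mu)$ for the finite measure $\tilde\mu\sim\mu$ given by $\frac{d\tilde\mu}{d\mu}(x)=|\int(y-x)P_x(dy)|$, and $(h_m)_{m\ge1}$ is bounded in $\mu$-probability.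
   Context: Standing setting: $\mu,\nu$ are Borel probability measures on $\mathbb{R}$ with finite first moments, in convex order, centered ($\int x\,\mu(dx)=\int y\,\nu(dy)=0$), and $\mu\neq\delta_0$. $\Pi(\mu,\nu)$: couplings; $P_x$: disintegration kernel w.r.t. the first marginal; $\mathcal{M}(\mu,\nu)$: martingale couplings; $H$: relative entropy. $L_m(\mathbb{R})=\{h:\mathbb{R}\to[-m,m]:\ h\text{ is }m\text{-Lipschitz and }xh(x)\le0\ \forall x\}$. Assumption A: there exists $\bar\pi\in\mathcal{M}(\mu,\nu)$ equivalent to $\mu\otimes\nu$ with $H(\bar\pi|\mu\otimes\nu)<\infty$. *)

theory Defs
  imports "HOL-Probability.Probability"
begin

definition first_moment :: "real measure \<Rightarrow> bool" where
  "first_moment M \<longleftrightarrow> integrable M (\<lambda>x. x)"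

definition convex_order :: "real measure \<Rightarrow> real measure \<Rightarrow> bool" where
  "convex_order \<mu> \<nu> \<longleftrightarrow>
     (\<forall>f. convex_on UNIV f \<longrightarrow> integrable \<nu> f \<longrightarrow>
          integrable \<mu> f \<and> (\<integral>x. f x \<partial>\<mu>) \<le> (\<integral>y. f y \<partial>\<nu>))"

definition couplings :: "real measure \<Rightarrow> real measure \<Rightarrow> (real \<times> real) measure set" where
  "couplings \<mu> \<nu> = {\<pi>. prob_space \<pi> \<and> sets \<pi> = sets (borel \<Otimes>\<^sub>M borel) \<and>
       distr \<pi> borel fst = \<mu> \<and> distr \<pi> borel snd = \<nu>}"

text \<open>K is a disintegration kernel of pi w.r.t. its first marginal mu:
  pi(dx,dy) = mu(dx) K x (dy).\<close>
definition disintegration :: "(real \<times> real) measure \<Rightarrow> real measure \<Rightarrow> (real \<Rightarrow> real measure) \<Rightarrow> bool" where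
  "disintegration \<pi> \<mu> K \<longleftrightarrow>
     K \<in> measurable \<mu> (prob_algebra borel) \<and>
     \<pi> = \<mu> \<bind> (\<lambda>x. distr (K x) (borel \<Otimes>\<^sub>M borel) (\<lambda>y. (x, y)))"

definition martingale_couplings :: "real measure \<Rightarrow> real measure \<Rightarrow> (real \<times> real) measure set" where
  "martingale_couplings \<mu> \<nu> = {\<pi>. \<pi> \<in> couplings \<mu> \<nu> \<and>
       (\<exists>K. disintegration \<pi> \<mu> K \<and>
            (AE x in \<mu>. integrable (K x) (\<lambda>y. y) \<and> (\<integral>y. y \<partial>K x) = x))}"

definition relent :: "'a measure \<Rightarrow> 'a measure \<Rightarrow> ereal" where
  "relent P Q =
     (if sets P = sets Q \<and> absolutely_continuous Q P then
        (let f = (\<lambda>z. enn2real (RN_deriv Q P z)) in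
          if integrable Q (\<lambda>z. f z * ln (f z)) then ereal (\<integral>z. f z * ln (f z) \<partial>Q) else \<infinity>)
      else \<infinity>)"

definition Lm :: "nat \<Rightarrow> (real \<Rightarrow> real) set" where
  "Lm m = {h. (\<forall>x. \<bar>h x\<bar> \<le> real m) \<and> (real m)-lipschitz_on UNIV h \<and> (\<forall>x. x * h x \<le> 0)}"

definition dual_obj :: "real measure \<Rightarrow> real measure \<Rightarrow> (real \<Rightarrow> real) \<Rightarrow> ereal" where
  "dual_obj \<mu> \<nu> h = (INF \<pi>\<in>couplings \<mu> \<nu>.
      ereal (\<integral>z. h (fst z) * (snd z - fst z) \<partial>\<pi>) + relent \<pi> (\<mu> \<Otimes>\<^sub>M \<nu>))"

end

theory Submission
  imports Defs
begin

text \<open>Since \<open>0 \<in> L\<^sub>m\<close> and relative entropy is nonnegative, the maximal dual value is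
  nonnegative; bounding the infimum by its value at \<open>P\<close> and disintegrating gives
  \<open>0 \<le> \<integral> h\<^sub>m(x) D(x) d\<mu> + H(P|\<mu>\<otimes>\<nu>)\<close> with \<open>D(x) = \<integral>(y - x) P\<^sub>x(dy)\<close>.
  The sign conditions on \<open>h\<^sub>m\<close> and on \<open>D\<close> turn \<open>h\<^sub>m D\<close> into \<open>-|h\<^sub>m| |D|\<close>, which is
  the bound, already for every \<open>m \<ge> 1\<close>. Boundedness in probability follows because \<open>D \<noteq> 0\<close>
  \<open>\<mu>\<close>-a.e.: off a small set where \<open>|D|\<close> is small, Markov's inequality applies.\<close>

lemma x_minus_one_le_x_ln_x:
  fixes x :: real
  assumes "0 \<le> x"
  shows "x - 1 \<le> x * ln x"
proof (cases "x = 0")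
  case False
  with assms have "0 < x" by simp
  have "- ln x \<le> 1 / x - 1"
    using ln_le_minus_one[of "1 / x"] \<open>0 < x\<close> by (simp add: ln_div)
  then have "x * - ln x \<le> x * (1 / x - 1)"
    using \<open>0 < x\<close> by (intro mult_left_mono) auto
  also have "\<dots> = 1 - x"
    using \<open>0 < x\<close> by (simp add: field_simps)
  finally show ?thesis
    by simp
qed simp

lemma relent_nonneg:
  assumes "prob_space P" and "prob_space Q"
  shows "0 \<le> relent P Q"
proof (cases "sets P = sets Q \<and> absolutely_continuous Q P")
  case True
  interpret P: prob_space P by fact
  interpret Q: prob_space Q by fact
  define f where "f z = enn2real (RN_deriv Q P z)" for z
  have "(\<integral>\<^sup>+z. RN_deriv Q P z \<partial>Q) = (\<integral>\<^sup>+z. 1 \<partial>P)"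
    using Q.RN_deriv_nn_integral[of P "\<lambda>_. 1"] True by simp
  then have RN_total: "(\<integral>\<^sup>+z. RN_deriv Q P z \<partial>Q) = 1"
    by (simp add: P.emeasure_space_1)
  then have "AE z in Q. RN_deriv Q P z \<noteq> \<infinity>"
    by (intro nn_integral_PInf_AE) auto
  then have f_total: "(\<integral>\<^sup>+z. ennreal (f z) \<partial>Q) = 1"
    unfolding RN_total[symmetric] f_def
    by (intro nn_integral_cong_AE) (auto simp: ennreal_enn2real_if)
  have f_nonneg: "0 \<le> f z" for z
    by (simp add: f_def)
  have f_meas: "f \<in> borel_measurable Q"
    unfolding f_def by measurable
  have f_int: "integrable Q f" and f_integral: "(\<integral>z. f z \<partial>Q) = 1"
    using f_total f_meas by (auto simp: f_def integral_eq_nn_integral intro!: integrableI_nonneg)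
  show ?thesis
  proof (cases "integrable Q (\<lambda>z. f z * ln (f z))")
    case True
    have "0 = (\<integral>z. f z - 1 \<partial>Q)"
      using f_int f_integral by (simp add: Q.prob_space)
    also have "\<dots> \<le> (\<integral>z. f z * ln (f z) \<partial>Q)"
      using f_int True by (intro integral_mono) (auto intro!: x_minus_one_le_x_ln_x f_nonneg)
    finally show ?thesis
      using \<open>sets P = sets Q \<and> _\<close> True by (simp add: relent_def f_def[abs_def])
  qed (use True in \<open>simp add: relent_def f_def[abs_def]\<close>)
qed (auto simp: relent_def)

lemma relent_eq_ereal:
  assumes "prob_space P" and "prob_space Q" and "relent P Q < \<infinity>"
  obtains r where "relent P Q = ereal r" and "0 \<le> r"
  using assms(3) relent_nonneg[OF assms(1,2)] by (cases "relent P Q") auto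

lemma AE_integrable_kernel:
  fixes g :: "'b \<Rightarrow> real"
  assumes g[measurable]: "g \<in> borel_measurable B"
    and N[measurable]: "N \<in> measurable M (subprob_algebra B)"
    and int: "integrable (M \<bind> N) g"
  shows "AE x in M. integrable (N x) g"
proof -
  have [measurable]: "(\<lambda>x. \<integral>\<^sup>+y. ennreal \<bar>g y\<bar> \<partial>N x) \<in> borel_measurable M"
    by (rule measurable_compose[OF N nn_integral_measurable_subprob_algebra]) measurable
  have "(\<integral>\<^sup>+x. \<integral>\<^sup>+y. ennreal \<bar>g y\<bar> \<partial>N x \<partial>M) = (\<integral>\<^sup>+z. ennreal \<bar>g z\<bar> \<partial>(M \<bind> N))"
    by (rule nn_integral_bind[OF _ N, symmetric]) measurable
  then have "(\<integral>\<^sup>+x. \<integral>\<^sup>+y. ennreal \<bar>g y\<bar> \<partial>N x \<partial>M) \<noteq> \<infinity>"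
    using int by (simp add: integrable_iff_bounded less_top[symmetric])
  then have "AE x in M. (\<integral>\<^sup>+y. ennreal \<bar>g y\<bar> \<partial>N x) \<noteq> \<infinity>"
    by (intro nn_integral_PInf_AE) auto
  then show ?thesis
    using AE_space
  proof eventually_elim
    case (elim x)
    have "g \<in> borel_measurable (N x)"
      using g sets_kernel[OF N elim(2)] by (simp cong: measurable_cong_sets)
    with elim(1) show ?case
      by (simp add: integrable_iff_bounded less_top)
  qed
qed

lemma
  fixes g :: "'b \<Rightarrow> real"
  assumes g[measurable]: "g \<in> borel_measurable B" and g_nonneg: "\<And>y. 0 \<le> g y"
    and N[measurable]: "N \<in> measurable M (subprob_algebra B)"
    and int: "integrable (M \<bind> N) g"
  shows integrable_bind_nonneg: "integrable M (\<lambda>x. \<integral>y. g y \<partial>N x)"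
    and integral_bind_nonneg: "(\<integral>z. g z \<partial>(M \<bind> N)) = (\<integral>x. \<integral>y. g y \<partial>N x \<partial>M)"
proof -
  have [measurable]: "(\<lambda>x. \<integral>y. g y \<partial>N x) \<in> borel_measurable M"
    by (rule measurable_compose[OF N integral_measurable_subprob_algebra]) measurable
  have "AE x in M. ennreal (\<integral>y. g y \<partial>N x) = (\<integral>\<^sup>+y. g y \<partial>N x)"
    using AE_integrable_kernel[OF g N int] by eventually_elim (simp add: nn_integral_eq_integral g_nonneg)
  then have "(\<integral>\<^sup>+x. ennreal (\<integral>y. g y \<partial>N x) \<partial>M) = (\<integral>\<^sup>+x. \<integral>\<^sup>+y. g y \<partial>N x \<partial>M)"
    by (rule nn_integral_cong_AE)
  also have "\<dots> = (\<integral>\<^sup>+z. g z \<partial>(M \<bind> N))"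
    by (rule nn_integral_bind[OF _ N, symmetric]) measurable
  finally have outer_eq: "(\<integral>\<^sup>+x. ennreal (\<integral>y. g y \<partial>N x) \<partial>M) = (\<integral>\<^sup>+z. g z \<partial>(M \<bind> N))" .
  have "(\<integral>\<^sup>+z. g z \<partial>(M \<bind> N)) < \<infinity>"
    using int by (simp add: integrable_iff_bounded abs_of_nonneg[OF g_nonneg])
  with outer_eq g_nonneg show "integrable M (\<lambda>x. \<integral>y. g y \<partial>N x)"
    by (intro integrableI_nonneg) auto
  show "(\<integral>z. g z \<partial>(M \<bind> N)) = (\<integral>x. \<integral>y. g y \<partial>N x \<partial>M)"
    using outer_eq g_nonneg borel_measurable_integrable[OF int]
    by (simp add: integral_eq_nn_integral)
qed

lemma
  fixes g :: "'b \<Rightarrow> real"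
  assumes g[measurable]: "g \<in> borel_measurable B"
    and N[measurable]: "N \<in> measurable M (subprob_algebra B)"
    and int: "integrable (M \<bind> N) g"
  shows integrable_bind_L1: "integrable M (\<lambda>x. \<integral>y. g y \<partial>N x)"
    and integral_bind_L1: "(\<integral>z. g z \<partial>(M \<bind> N)) = (\<integral>x. \<integral>y. g y \<partial>N x \<partial>M)"
proof -
  define gp gn where "gp y = max 0 (g y)" and "gn y = max 0 (- g y)" for y
  have [measurable]: "gp \<in> borel_measurable B" "gn \<in> borel_measurable B"
    unfolding gp_def gn_def by measurable
  have int_parts: "integrable (M \<bind> N) gp" "integrable (M \<bind> N) gn"
    using int unfolding gp_def gn_def by auto
  have parts_nonneg: "0 \<le> gp y" "0 \<le> gn y" for y
    unfolding gp_def gn_def by auto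
  note parts_int = integrable_bind_nonneg[OF _ parts_nonneg(1) N int_parts(1)]
    integrable_bind_nonneg[OF _ parts_nonneg(2) N int_parts(2)]
  note parts_eq = integral_bind_nonneg[OF _ parts_nonneg(1) N int_parts(1)]
    integral_bind_nonneg[OF _ parts_nonneg(2) N int_parts(2)]
  have [measurable]: "(\<lambda>x. \<integral>y. g y \<partial>N x) \<in> borel_measurable M"
    by (rule measurable_compose[OF N integral_measurable_subprob_algebra]) measurable
  have ae: "AE x in M. (\<integral>y. g y \<partial>N x) = (\<integral>y. gp y \<partial>N x) - (\<integral>y. gn y \<partial>N x)"
    using AE_integrable_kernel[OF g N int]
  proof eventually_elim
    case (elim x)
    have "(\<integral>y. g y \<partial>N x) = (\<integral>y. gp y - gn y \<partial>N x)"
      by (rule Bochner_Integration.integral_cong) (auto simp: gp_def gn_def)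
    also have "\<dots> = (\<integral>y. gp y \<partial>N x) - (\<integral>y. gn y \<partial>N x)"
      using elim unfolding gp_def gn_def by (intro Bochner_Integration.integral_diff) auto
    finally show ?case .
  qed
  show "integrable M (\<lambda>x. \<integral>y. g y \<partial>N x)"
    using ae by (intro integrable_cong_AE_imp[OF Bochner_Integration.integrable_diff[OF parts_int]]) auto
  have "(\<integral>z. g z \<partial>(M \<bind> N)) = (\<integral>z. gp z \<partial>(M \<bind> N)) - (\<integral>z. gn z \<partial>(M \<bind> N))"
    using int_parts by (subst Bochner_Integration.integral_diff[symmetric]) (auto simp: gp_def gn_def intro: Bochner_Integration.integral_cong)
  also have "\<dots> = (\<integral>x. (\<integral>y. gp y \<partial>N x) - (\<integral>y. gn y \<partial>N x) \<partial>M)"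
    using parts_int by (simp add: parts_eq)
  also have "\<dots> = (\<integral>x. \<integral>y. g y \<partial>N x \<partial>M)"
    using ae by (intro integral_cong_AE) auto
  finally show "(\<integral>z. g z \<partial>(M \<bind> N)) = (\<integral>x. \<integral>y. g y \<partial>N x \<partial>M)" .
qed

lemma
  fixes g :: "real \<times> real \<Rightarrow> real"
  assumes sets_\<mu>: "sets \<mu> = sets borel" and dis: "disintegration P \<mu> K"
    and g[measurable]: "g \<in> borel_measurable (borel \<Otimes>\<^sub>M borel)"
    and int: "integrable P g"
  shows integrable_disintegration: "integrable \<mu> (\<lambda>x. \<integral>y. g (x, y) \<partial>K x)"
    and integral_disintegration: "(\<integral>z. g z \<partial>P) = (\<integral>x. \<integral>y. g (x, y) \<partial>K x \<partial>\<mu>)"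
proof -
  have K: "K \<in> measurable \<mu> (prob_algebra borel)"
    and P_eq: "P = \<mu> \<bind> (\<lambda>x. distr (K x) (borel \<Otimes>\<^sub>M borel) (\<lambda>y. (x, y)))"
    using dis by (auto simp: disintegration_def)
  have "(\<lambda>(x, y). (x, y)) \<in> \<mu> \<Otimes>\<^sub>M borel \<rightarrow>\<^sub>M (borel \<Otimes>\<^sub>M borel :: (real \<times> real) measure)"
    using measurable_ident_sets[OF sets_pair_measure_cong[OF sets_\<mu> refl]]
    by (simp add: case_prod_beta')
  then have N: "(\<lambda>x. distr (K x) (borel \<Otimes>\<^sub>M borel) (\<lambda>y. (x, y)))
      \<in> measurable \<mu> (subprob_algebra (borel \<Otimes>\<^sub>M borel))"
    by (rule measurable_distr2[OF _ measurable_prob_algebraD[OF K]])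
  have inner: "(\<integral>z. g z \<partial>distr (K x) (borel \<Otimes>\<^sub>M borel) (\<lambda>y. (x, y))) = (\<integral>y. g (x, y) \<partial>K x)"
    if "x \<in> space \<mu>" for x
  proof -
    have "sets (K x) = sets borel"
      using measurable_space[OF K that] by (simp add: space_prob_algebra)
    then have "(\<lambda>y. (x, y)) \<in> K x \<rightarrow>\<^sub>M (borel \<Otimes>\<^sub>M borel :: (real \<times> real) measure)"
      by (simp cong: measurable_cong_sets)
    then show ?thesis
      by (rule integral_distr) simp
  qed
  show "integrable \<mu> (\<lambda>x. \<integral>y. g (x, y) \<partial>K x)"
    using integrable_bind_L1[OF g N] int P_eq inner
    by (subst Bochner_Integration.integrable_cong[OF refl, symmetric]) auto
  show "(\<integral>z. g z \<partial>P) = (\<integral>x. \<integral>y. g (x, y) \<partial>K x \<partial>\<mu>)"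
    using integral_bind_L1[OF g N] int P_eq inner
    by (auto intro!: Bochner_Integration.integral_cong)
qed

definition drift :: "(real \<Rightarrow> real measure) \<Rightarrow> real \<Rightarrow> real" where
  "drift K x = (\<integral>y. y - x \<partial>K x)"

lemma integrable_displacement:
  assumes "P \<in> couplings \<mu> \<nu>" and "first_moment \<mu>" and "first_moment \<nu>"
  shows "integrable P (\<lambda>z. snd z - fst z)"
proof -
  have sets_P: "sets P = sets (borel \<Otimes>\<^sub>M borel)"
    and marginals: "distr P borel fst = \<mu>" "distr P borel snd = \<nu>"
    using assms(1) by (auto simp: couplings_def)
  have fst_meas: "fst \<in> P \<rightarrow>\<^sub>M (borel :: real measure)" and snd_meas: "snd \<in> P \<rightarrow>\<^sub>M (borel :: real measure)"
    unfolding measurable_cong_sets[OF sets_P refl] by simp_all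
  have "integrable (distr P borel fst) (\<lambda>x::real. x)" and "integrable (distr P borel snd) (\<lambda>y::real. y)"
    using assms(2,3) marginals by (simp_all add: first_moment_def)
  moreover have id_meas: "(\<lambda>x::real. x) \<in> borel_measurable borel"
    by simp
  ultimately have "integrable P (\<lambda>z. fst z)" and "integrable P (\<lambda>z. snd z)"
    using integrable_distr_eq[OF fst_meas id_meas] integrable_distr_eq[OF snd_meas id_meas] by blast+
  then show ?thesis
    by auto
qed

lemma
  assumes "sets \<mu> = sets borel" and "disintegration P \<mu> K"
    and sets_P: "sets P = sets (borel \<Otimes>\<^sub>M borel)"
    and h[measurable]: "h \<in> borel_measurable borel" and h_bounded: "\<And>x. \<bar>h x\<bar> \<le> B"
    and int: "integrable P (\<lambda>z. snd z - fst z)"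
  shows integrable_mult_drift: "integrable \<mu> (\<lambda>x. h x * drift K x)"
    and integral_mult_drift: "(\<integral>z. h (fst z) * (snd z - fst z) \<partial>P) = (\<integral>x. h x * drift K x \<partial>\<mu>)"
proof -
  define g where "g z = h (fst z) * (snd z - fst z)" for z
  have g_meas[measurable]: "g \<in> borel_measurable (borel \<Otimes>\<^sub>M borel)"
    unfolding g_def by measurable
  have "integrable P g"
  proof (rule Bochner_Integration.integrable_bound)
    show "integrable P (\<lambda>z. B * (snd z - fst z))"
      using int by simp
    show "AE z in P. norm (g z) \<le> norm (B * (snd z - fst z))"
      by (intro AE_I2) (auto simp: g_def abs_mult intro!: mult_right_mono order_trans[OF h_bounded abs_ge_self])
    show "g \<in> borel_measurable P"
      by (simp cong: measurable_cong_sets[OF sets_P refl])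
  qed
  note disintegrate = integrable_disintegration[OF assms(1,2) g_meas this]
    integral_disintegration[OF assms(1,2) g_meas this]
  have inner: "(\<integral>y. g (x, y) \<partial>K x) = h x * drift K x" for x
    by (simp add: g_def drift_def)
  show "integrable \<mu> (\<lambda>x. h x * drift K x)"
    using disintegrate(1) by (simp add: inner)
  have "(\<integral>z. h (fst z) * (snd z - fst z) \<partial>P) = (\<integral>z. g z \<partial>P)"
    by (simp add: g_def)
  also have "\<dots> = (\<integral>x. h x * drift K x \<partial>\<mu>)"
    unfolding disintegrate(2) inner ..
  finally show "(\<integral>z. h (fst z) * (snd z - fst z) \<partial>P) = (\<integral>x. h x * drift K x \<partial>\<mu>)" .
qed

lemma integrable_drift:
  assumes "sets \<mu> = sets borel" and "disintegration P \<mu> K"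
    and "sets P = sets (borel \<Otimes>\<^sub>M borel)" and "integrable P (\<lambda>z. snd z - fst z)"
  shows "integrable \<mu> (drift K)"
  using integrable_mult_drift[OF assms(1-3), of "\<lambda>_. 1" 1] assms(4) by simp

lemma Lm_borel_measurable: "h \<in> Lm m \<Longrightarrow> h \<in> borel_measurable borel"
  unfolding Lm_def by (auto intro: borel_measurable_continuous_onI lipschitz_on_continuous_on)

lemma Lm_abs_le: "h \<in> Lm m \<Longrightarrow> \<bar>h x\<bar> \<le> real m"
  unfolding Lm_def by auto

lemma Lm_nonneg_on_neg:
  assumes "h \<in> Lm m" and "x < 0"
  shows "0 \<le> h x"
proof -
  have "x * h x \<le> 0"
    using assms(1) by (simp add: Lm_def)
  with assms(2) show ?thesis
    by (simp add: mult_le_0_iff)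
qed

text \<open>At the origin the sign condition is void; continuity forces \<open>h 0 \<le> 0\<close>.\<close>

lemma Lm_nonpos_on_nonneg:
  assumes h: "h \<in> Lm m" and "0 \<le> x"
  shows "h x \<le> 0"
proof (cases "x = 0")
  case True
  have L: "(real m)-lipschitz_on UNIV h" and sign: "\<And>t. t * h t \<le> 0"
    using h by (auto simp: Lm_def)
  have "h 0 \<le> 0 + e" if "0 < e" for e
  proof -
    define t where "t = e / (real m + 1)"
    have "0 < t"
      using that by (simp add: t_def)
    then have "h t \<le> 0"
      using sign[of t] by (simp add: mult_le_0_iff)
    moreover have "h 0 - h t \<le> real m * t"
      using lipschitz_onD[OF L, of 0 t] \<open>0 < t\<close> by (simp add: dist_real_def)
    moreover have "real m * t \<le> e"
      using that by (simp add: t_def field_simps)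
    ultimately show ?thesis
      by linarith
  qed
  with True show ?thesis
    by (simp add: field_le_epsilon)
next
  case False
  have "x * h x \<le> 0"
    using h by (simp add: Lm_def)
  with False \<open>0 \<le> x\<close> show ?thesis
    by (simp add: mult_le_0_iff)
qed

lemma zero_in_Lm: "(\<lambda>_. 0) \<in> Lm m"
  unfolding Lm_def by (auto intro: lipschitz_on_le[OF lipschitz_on_constant])

lemma dual_obj_zero_nonneg:
  assumes "prob_space \<mu>" and "prob_space \<nu>"
  shows "0 \<le> dual_obj \<mu> \<nu> (\<lambda>_. 0)"
  unfolding dual_obj_def
proof (rule INF_greatest)
  fix \<pi> assume "\<pi> \<in> couplings \<mu> \<nu>"
  then have "0 \<le> relent \<pi> (\<mu> \<Otimes>\<^sub>M \<nu>)"
    by (intro relent_nonneg prob_space_pair assms) (simp add: couplings_def)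
  then show "0 \<le> ereal (\<integral>z. 0 * (snd z - fst z) \<partial>\<pi>) + relent \<pi> (\<mu> \<Otimes>\<^sub>M \<nu>)"
    by simp
qed

lemma maximizer_dual_obj_nonneg:
  assumes "prob_space \<mu>" and "prob_space \<nu>"
    and "\<forall>g\<in>Lm m. dual_obj \<mu> \<nu> g \<le> dual_obj \<mu> \<nu> h"
  shows "0 \<le> dual_obj \<mu> \<nu> h"
  using dual_obj_zero_nonneg[OF assms(1,2)] assms(3) zero_in_Lm by (blast intro: order_trans)

lemma nn_integral_abs_eq_minus_integral:
  fixes f :: "'a \<Rightarrow> real"
  assumes "integrable M f" and "AE x in M. f x \<le> 0"
  shows "(\<integral>\<^sup>+x. ennreal \<bar>f x\<bar> \<partial>M) = ennreal (- (\<integral>x. f x \<partial>M))"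
proof -
  have "(\<integral>\<^sup>+x. ennreal \<bar>f x\<bar> \<partial>M) = (\<integral>\<^sup>+x. ennreal (- f x) \<partial>M)"
    using assms(2) by (intro nn_integral_cong_AE) auto
  also have "\<dots> = ennreal (\<integral>x. - f x \<partial>M)"
    using assms by (intro nn_integral_eq_integral) auto
  finally show ?thesis
    by simp
qed

lemma nn_integral_abs_mult_drift_le_relent:
  assumes sets_\<mu>: "sets \<mu> = sets borel" and "prob_space \<mu>" and "prob_space \<nu>"
    and P: "P \<in> couplings \<mu> \<nu>" and K: "disintegration P \<mu> K"
    and "first_moment \<mu>" and "first_moment \<nu>"
    and drift_sign: "AE x in \<mu>. (0 \<le> x \<longrightarrow> 0 \<le> drift K x) \<and> (x < 0 \<longrightarrow> drift K x \<le> 0)"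
    and h: "h \<in> Lm m" and dual: "0 \<le> dual_obj \<mu> \<nu> h"
  shows "enn2ereal (\<integral>\<^sup>+x. ennreal (\<bar>h x\<bar> * \<bar>drift K x\<bar>) \<partial>\<mu>) \<le> relent P (\<mu> \<Otimes>\<^sub>M \<nu>)"
proof -
  have sets_P: "sets P = sets (borel \<Otimes>\<^sub>M borel)" and "prob_space P"
    using P by (auto simp: couplings_def)
  have int: "integrable P (\<lambda>z. snd z - fst z)"
    using integrable_displacement P assms(6,7) by blast
  note drift_facts = integrable_mult_drift[OF sets_\<mu> K sets_P Lm_borel_measurable[OF h] Lm_abs_le[OF h] int]
    integral_mult_drift[OF sets_\<mu> K sets_P Lm_borel_measurable[OF h] Lm_abs_le[OF h] int]
  define I where "I = (\<integral>z. h (fst z) * (snd z - fst z) \<partial>P)"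
  have "AE x in \<mu>. h x * drift K x \<le> 0"
    using drift_sign
  proof eventually_elim
    case (elim x)
    show ?case
    proof (cases "0 \<le> x")
      case True
      then show ?thesis
        using elim Lm_nonpos_on_nonneg[OF h True] by (simp add: mult_nonpos_nonneg)
    next
      case False
      then show ?thesis
        using elim Lm_nonneg_on_neg[OF h] by (simp add: mult_nonneg_nonpos)
    qed
  qed
  then have weighted_eq: "(\<integral>\<^sup>+x. ennreal (\<bar>h x\<bar> * \<bar>drift K x\<bar>) \<partial>\<mu>) = ennreal (- I)"
    using nn_integral_abs_eq_minus_integral[OF drift_facts(1)] drift_facts(2)
    by (simp add: I_def abs_mult)
  have "0 \<le> dual_obj \<mu> \<nu> h" by (fact dual)
  also have "\<dots> \<le> ereal I + relent P (\<mu> \<Otimes>\<^sub>M \<nu>)"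
    unfolding dual_obj_def I_def by (rule INF_lower2[OF P]) simp
  finally have dual_le: "0 \<le> ereal I + relent P (\<mu> \<Otimes>\<^sub>M \<nu>)" .
  have "0 \<le> relent P (\<mu> \<Otimes>\<^sub>M \<nu>)"
    using relent_nonneg[OF \<open>prob_space P\<close> prob_space_pair[OF assms(2,3)]] .
  then consider r where "relent P (\<mu> \<Otimes>\<^sub>M \<nu>) = ereal r" "0 \<le> r" | "relent P (\<mu> \<Otimes>\<^sub>M \<nu>) = \<infinity>"
    by (cases "relent P (\<mu> \<Otimes>\<^sub>M \<nu>)") auto
  then show ?thesis
  proof cases
    case 1
    with dual_le have "ennreal (- I) \<le> ennreal r"
      by (intro ennreal_leI) simp
    then show ?thesis
      using 1 weighted_eq less_eq_ennreal.rep_eq by fastforce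
  qed simp
qed

lemma finite_measure_density_abs:
  fixes f :: "'a \<Rightarrow> real"
  assumes "integrable M f"
  shows "finite_measure (density M (\<lambda>x. ennreal \<bar>f x\<bar>))"
proof (rule finite_measureI)
  have [measurable]: "f \<in> borel_measurable M"
    using assms by simp
  have "emeasure (density M (\<lambda>x. ennreal \<bar>f x\<bar>)) (space M) = (\<integral>\<^sup>+x. ennreal \<bar>f x\<bar> \<partial>M)"
    by (simp add: emeasure_density nn_integral_set_ennreal[symmetric])
  then show "emeasure (density M (\<lambda>x. ennreal \<bar>f x\<bar>)) (space (density M (\<lambda>x. ennreal \<bar>f x\<bar>))) \<noteq> \<infinity>"
    using assms by (simp add: integrable_iff_bounded less_top)
qed

lemma absolutely_continuous_density_nonzero:
  fixes f :: "'a \<Rightarrow> real"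
  assumes [measurable]: "f \<in> borel_measurable M" and nonzero: "AE x in M. f x \<noteq> 0"
  shows "absolutely_continuous (density M (\<lambda>x. ennreal \<bar>f x\<bar>)) M"
  unfolding absolutely_continuous_def
proof
  fix A assume "A \<in> null_sets (density M (\<lambda>x. ennreal \<bar>f x\<bar>))"
  then have A: "A \<in> sets M" and vanish: "AE x\<in>A in M. ennreal \<bar>f x\<bar> = 0"
    by (auto simp: null_sets_density_iff)
  from nonzero vanish have "AE x in M. x \<notin> A"
    by eventually_elim auto
  with A show "A \<in> null_sets M"
    by (simp add: AE_iff_null_sets)
qed

lemma nn_integral_density_abs:
  fixes w g :: "'a \<Rightarrow> real"
  assumes "w \<in> borel_measurable M" and "g \<in> borel_measurable M"
  shows "(\<integral>\<^sup>+x. ennreal \<bar>g x\<bar> \<partial>density M (\<lambda>x. ennreal \<bar>w x\<bar>)) = (\<integral>\<^sup>+x. ennreal (\<bar>g x\<bar> * \<bar>w x\<bar>) \<partial>M)"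
  using assms by (simp add: nn_integral_density ennreal_mult' mult.commute)

lemma (in finite_measure) exists_measure_abs_less:
  fixes f :: "'a \<Rightarrow> real"
  assumes [measurable]: "f \<in> borel_measurable M" and nonzero: "AE x in M. f x \<noteq> 0"
    and "0 < \<epsilon>"
  shows "\<exists>\<delta>>0. measure M {x\<in>space M. \<bar>f x\<bar> < \<delta>} < \<epsilon>"
proof -
  define S where "S n = {x\<in>space M. \<bar>f x\<bar> < 1 / (real n + 1)}" for n :: nat
  have S_sets: "range S \<subseteq> sets M"
    unfolding S_def by auto
  have "1 / (real n + 1) \<le> 1 / (real m + 1)" if "m \<le> n" for m n
    using that by (simp add: frac_le)
  then have "decseq S"
    unfolding decseq_def S_def by (auto intro: less_le_trans)
  have "(\<Inter>n. S n) = {x\<in>space M. f x = 0}"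
  proof (intro equalityI subsetI)
    fix x assume x: "x \<in> (\<Inter>n. S n)"
    have "\<bar>f x\<bar> \<le> 0"
    proof (rule field_le_epsilon)
      fix e :: real assume "0 < e"
      then obtain n where "inverse (real (Suc n)) < e"
        using reals_Archimedean by blast
      moreover have "x \<in> S n"
        using x by blast
      ultimately show "\<bar>f x\<bar> \<le> 0 + e"
        by (simp add: S_def inverse_eq_divide add.commute)
    qed
    with x show "x \<in> {x\<in>space M. f x = 0}"
      by (auto simp: S_def)
  qed (auto simp: S_def)
  moreover have "{x\<in>space M. f x = 0} \<in> null_sets M"
  proof -
    have "AE x in M. x \<notin> {x\<in>space M. f x = 0}"
      using nonzero by eventually_elim auto
    then show ?thesis
      by (subst AE_iff_null_sets) auto
  qed
  ultimately have "(\<lambda>n. measure M (S n)) \<longlonglongrightarrow> 0"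
    using finite_Lim_measure_decseq[OF S_sets \<open>decseq S\<close>] by (simp add: measure_def null_setsD1)
  then have "eventually (\<lambda>n. measure M (S n) < \<epsilon>) sequentially"
    using \<open>0 < \<epsilon>\<close> by (rule order_tendstoD(2))
  then obtain n where "measure M (S n) < \<epsilon>"
    by (auto simp: eventually_sequentially)
  then show ?thesis
    by (intro exI[of _ "1 / (real n + 1)"]) (auto simp: S_def)
qed

text \<open>Split off the small set where \<open>|w| < \<delta>\<close> and apply Markov's inequality on its complement.\<close>

lemma (in finite_measure) uniformly_bounded_in_measure_of_weighted_bound:
  fixes w :: "'a \<Rightarrow> real" and g :: "'i \<Rightarrow> 'a \<Rightarrow> real"
  assumes [measurable]: "w \<in> borel_measurable M" and "AE x in M. w x \<noteq> 0"
    and g[measurable]: "\<And>i. i \<in> I \<Longrightarrow> g i \<in> borel_measurable M"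
    and bound: "\<And>i. i \<in> I \<Longrightarrow> (\<integral>\<^sup>+x. ennreal (\<bar>g i x\<bar> * \<bar>w x\<bar>) \<partial>M) \<le> ennreal C"
    and "0 < \<epsilon>"
  shows "\<exists>R. \<forall>i\<in>I. measure M {x\<in>space M. R < \<bar>g i x\<bar>} \<le> \<epsilon>"
proof -
  obtain \<delta> where "0 < \<delta>" and small: "measure M {x\<in>space M. \<bar>w x\<bar> < \<delta>} < \<epsilon> / 2"
    using exists_measure_abs_less[OF assms(1,2), of "\<epsilon> / 2"] \<open>0 < \<epsilon>\<close> by auto
  define C' where "C' = max C 0"
  define R where "R = 2 * C' / (\<delta> * \<epsilon>) + 1"
  have "0 \<le> C'"
    by (simp add: C'_def)
  then have "0 < R"
    using \<open>0 < \<delta>\<close> \<open>0 < \<epsilon>\<close> by (simp add: R_def add_nonneg_pos)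
  have "\<epsilon> / 2 * (R * \<delta>) = C' + \<epsilon> * \<delta> / 2"
    using \<open>0 < \<delta>\<close> \<open>0 < \<epsilon>\<close> by (simp add: R_def field_simps)
  then have "C' / (R * \<delta>) \<le> \<epsilon> / 2"
    using \<open>0 < R\<close> \<open>0 < \<delta>\<close> \<open>0 < \<epsilon>\<close> by (simp add: pos_divide_le_eq)
  have "measure M {x\<in>space M. R < \<bar>g i x\<bar>} \<le> \<epsilon>" if i: "i \<in> I" for i
  proof -
    note [measurable] = g[OF i]
    define T where "T = {x\<in>space M. \<delta> \<le> \<bar>w x\<bar> \<and> R < \<bar>g i x\<bar>}"
    have [measurable]: "T \<in> sets M"
      unfolding T_def by measurable
    have "ennreal (R * \<delta>) * emeasure M T = (\<integral>\<^sup>+x. ennreal (R * \<delta>) * indicator T x \<partial>M)"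
      by (simp add: nn_integral_cmult_indicator)
    also have "\<dots> \<le> (\<integral>\<^sup>+x. ennreal (\<bar>g i x\<bar> * \<bar>w x\<bar>) \<partial>M)"
      using \<open>0 < R\<close> \<open>0 < \<delta>\<close>
      by (intro nn_integral_mono) (auto simp: T_def indicator_def intro!: ennreal_leI mult_mono)
    also have "\<dots> \<le> ennreal C'"
      using bound[OF i] by (simp add: C'_def ennreal_max_0)
    finally have "R * \<delta> * measure M T \<le> C'"
      using \<open>0 < R\<close> \<open>0 < \<delta>\<close> \<open>0 \<le> C'\<close> by (simp add: emeasure_eq_measure ennreal_mult'[symmetric])
    then have "measure M T \<le> C' / (R * \<delta>)"
      using \<open>0 < R\<close> \<open>0 < \<delta>\<close> by (simp add: pos_le_divide_eq mult.commute)
    with \<open>C' / (R * \<delta>) \<le> \<epsilon> / 2\<close> have "measure M T \<le> \<epsilon> / 2"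
      by linarith
    have "measure M {x\<in>space M. R < \<bar>g i x\<bar>} \<le> measure M ({x\<in>space M. \<bar>w x\<bar> < \<delta>} \<union> T)"
      by (intro finite_measure_mono) (auto simp: T_def)
    also have "\<dots> \<le> measure M {x\<in>space M. \<bar>w x\<bar> < \<delta>} + measure M T"
      by (intro measure_Un_le) auto
    finally show ?thesis
      using small \<open>measure M T \<le> \<epsilon> / 2\<close> by linarith
  qed
  then show ?thesis
    by blast
qed

theorem mainTheorem8:
  fixes \<mu> \<nu> :: "real measure" and P :: "(real \<times> real) measure"
    and K :: "real \<Rightarrow> real measure" and h :: "nat \<Rightarrow> real \<Rightarrow> real"
  assumes mu_prob: "prob_space \<mu>" and mu_sets: "sets \<mu> = sets borel"
    and nu_prob: "prob_space \<nu>" and nu_sets: "sets \<nu> = sets borel"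
    and mom_mu: "first_moment \<mu>" and mom_nu: "first_moment \<nu>"
    and cx: "convex_order \<mu> \<nu>"
    and cent_mu: "(\<integral>x. x \<partial>\<mu>) = 0" and cent_nu: "(\<integral>y. y \<partial>\<nu>) = 0"
    and not_dirac: "\<mu> \<noteq> return borel 0"
    and assumptionA: "\<exists>\<pi>. \<pi> \<in> martingale_couplings \<mu> \<nu> \<and>
        absolutely_continuous (\<mu> \<Otimes>\<^sub>M \<nu>) \<pi> \<and> absolutely_continuous \<pi> (\<mu> \<Otimes>\<^sub>M \<nu>) \<and>
        relent \<pi> (\<mu> \<Otimes>\<^sub>M \<nu>) < \<infinity>"
    and P_coupling: "P \<in> couplings \<mu> \<nu>"
    and P_ent: "relent P (\<mu> \<Otimes>\<^sub>M \<nu>) < \<infinity>"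
    and K_dis: "disintegration P \<mu> K"
    and drift: "AE x in \<mu>. (x \<ge> 0 \<longrightarrow> (\<integral>y. (y - x) \<partial>K x) > 0) \<and>
                            (x < 0 \<longrightarrow> (\<integral>y. (y - x) \<partial>K x) < 0)"
    and h_max: "\<And>m. m \<ge> 1 \<Longrightarrow> h m \<in> Lm m \<and> (\<forall>g\<in>Lm m. dual_obj \<mu> \<nu> g \<le> dual_obj \<mu> \<nu> (h m))"
  shows "\<exists>m0\<ge>1.
      (\<forall>m\<ge>m0. enn2ereal (\<integral>\<^sup>+x. ennreal (\<bar>h m x\<bar> * \<bar>\<integral>y. (y - x) \<partial>K x\<bar>) \<partial>\<mu>)
                 \<le> relent P (\<mu> \<Otimes>\<^sub>M \<nu>))
    \<and> (let \<mu>' = density \<mu> (\<lambda>x. ennreal \<bar>\<integral>y. (y - x) \<partial>K x\<bar>) in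
         finite_measure \<mu>' \<and> absolutely_continuous \<mu> \<mu>' \<and> absolutely_continuous \<mu>' \<mu> \<and>
         (\<exists>C. \<forall>m\<ge>m0. (\<integral>\<^sup>+x. ennreal \<bar>h m x\<bar> \<partial>\<mu>') \<le> ennreal C))
    \<and> (\<forall>\<epsilon>>0. \<exists>R. \<forall>m\<ge>1. measure \<mu> {x. \<bar>h m x\<bar> > R} \<le> \<epsilon>)"
proof -
  interpret \<mu>: prob_space \<mu> by (fact mu_prob)
  have "prob_space P" and sets_P: "sets P = sets (borel \<Otimes>\<^sub>M borel)"
    using P_coupling by (auto simp: couplings_def)
  have drift_int: "integrable \<mu> (drift K)"
    using integrable_drift[OF mu_sets K_dis sets_P integrable_displacement[OF P_coupling mom_mu mom_nu]] .
  then have [measurable]: "drift K \<in> borel_measurable \<mu>"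
    by simp
  have drift_nonzero: "AE x in \<mu>. drift K x \<noteq> 0"
    and drift_sign: "AE x in \<mu>. (0 \<le> x \<longrightarrow> 0 \<le> drift K x) \<and> (x < 0 \<longrightarrow> drift K x \<le> 0)"
    using drift by (eventually_elim, force simp: drift_def)+
  have weighted_bound: "enn2ereal (\<integral>\<^sup>+x. ennreal (\<bar>h m x\<bar> * \<bar>drift K x\<bar>) \<partial>\<mu>) \<le> relent P (\<mu> \<Otimes>\<^sub>M \<nu>)"
    and [measurable]: "h m \<in> borel_measurable \<mu>" if "1 \<le> m" for m
    using nn_integral_abs_mult_drift_le_relent[OF mu_sets mu_prob nu_prob P_coupling K_dis mom_mu mom_nu drift_sign]
      maximizer_dual_obj_nonneg[OF mu_prob nu_prob] Lm_borel_measurable h_max[OF that] mu_sets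
    by (auto cong: measurable_cong_sets)
  obtain r where "relent P (\<mu> \<Otimes>\<^sub>M \<nu>) = ereal r" "0 \<le> r"
    using relent_eq_ereal[OF \<open>prob_space P\<close> prob_space_pair[OF mu_prob nu_prob] P_ent] .
  then have L1_bound: "(\<integral>\<^sup>+x. ennreal (\<bar>h m x\<bar> * \<bar>drift K x\<bar>) \<partial>\<mu>) \<le> ennreal r" if "1 \<le> m" for m
    using weighted_bound[OF that] by (metis enn2ereal_ennreal less_eq_ennreal.rep_eq)
  have tight: "\<exists>R. \<forall>m\<ge>1. measure \<mu> {x. R < \<bar>h m x\<bar>} \<le> \<epsilon>" if "0 < \<epsilon>" for \<epsilon>
    using \<mu>.uniformly_bounded_in_measure_of_weighted_bound[where I="{1..}" and g=h and C=r, OF _ drift_nonzero]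
      L1_bound that sets_eq_imp_space_eq[OF mu_sets] by (simp add: Ball_def)
  show ?thesis
    unfolding drift_def[symmetric] Let_def
    using weighted_bound L1_bound tight finite_measure_density_abs[OF drift_int]
      absolutely_continuousI_density[of _ \<mu>] absolutely_continuous_density_nonzero[OF _ drift_nonzero]
    by (intro exI[of _ "1::nat"] conjI exI[of _ r]) (auto simp: nn_integral_density_abs)
qed

end
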